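(* If there is no infinite $T$-rewrite sequence starting from any string of the canonical form $\lhd w\rhd$ with $w\in\{0_2,1_2,0_3,1_3,2_3\}^*$, then $T$ is terminating (on all strings over its alphabet).
   Context: A string rewriting system (SRS) $R$ over an alphabet $\Sigma$ is a set of pairs $\ell\to r$ of strings; it induces the rewrite relation $u\ell v\to_R urv$ ($u,v\in\Sigma^*$). $R$ is terminating if there is no infinite sequence $s_0\to_R s_1\to_R\cdots$. Alphabet: $\{0_2,1_2,0_3,1_3,2_3,\lhd,\rhd\}$. $T=D_T\cup A\cup B$ where $D_T=\{0_2\rhd\to\rhd,\ 1_2\rhd\to 2_3\rhd\}$; $A=\{0_20_3\to0_30_2,\ 0_21_3\to0_31_2,\ 0_22_3\to1_30_2,\ 1_20_3\to1_31_2,\ 1_21_3\to2_30_2,\ 1_22_3\to2_31_2\}$; $B=\{\lhd0_3\to\lhd1_2,\ \lhd1_3\to\lhd0_20_2,\ \lhd2_3\to\lhd0_21_2\}$. *)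

theory Defs
  imports Main
begin

text \<open>Alphabet: 0_2, 1_2, 0_3, 1_3, 2_3, left marker, right marker.\<close>
datatype sym = Z2 | O2 | Z3 | O3 | T3 | LM | RM

type_synonym srs = "(sym list \<times> sym list) set"

definition rstep :: "srs \<Rightarrow> sym list \<Rightarrow> sym list \<Rightarrow> bool" where
  "rstep R s t \<longleftrightarrow> (\<exists>u v l r. (l, r) \<in> R \<and> s = u @ l @ v \<and> t = u @ r @ v)"

definition infinite_seq_from :: "srs \<Rightarrow> sym list \<Rightarrow> bool" where
  "infinite_seq_from R s \<longleftrightarrow> (\<exists>f :: nat \<Rightarrow> sym list. f 0 = s \<and> (\<forall>i. rstep R (f i) (f (Suc i))))"

definition terminating :: "srs \<Rightarrow> bool" where
  "terminating R \<longleftrightarrow> \<not> (\<exists>f :: nat \<Rightarrow> sym list. \<forall>i. rstep R (f i) (f (Suc i)))"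

definition D_T :: srs where
  "D_T = {([Z2, RM], [RM]), ([O2, RM], [T3, RM])}"

definition A_rules :: srs where
  "A_rules = {([Z2, Z3], [Z3, Z2]), ([Z2, O3], [Z3, O2]), ([Z2, T3], [O3, Z2]),
              ([O2, Z3], [O3, O2]), ([O2, O3], [T3, Z2]), ([O2, T3], [T3, O2])}"

definition B_rules :: srs where
  "B_rules = {([LM, Z3], [LM, O2]), ([LM, O3], [LM, Z2, Z2]), ([LM, T3], [LM, Z2, O2])}"

definition T_sys :: srs where
  "T_sys = D_T \<union> A_rules \<union> B_rules"

definition inner :: "sym set" where
  "inner = {Z2, O2, Z3, O3, T3}"

end

theory Submission
  imports Defs
begin

text \<open>
  The markers split strings into independent parts: \<open>\<lhd>\<close> occurs in a left-hand side only
  as its first letter and \<open>\<rhd>\<close> only as its last one, and the right-hand side keeps the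
  marker in place. So every step of \<open>x m y\<close>, for a marker \<open>m\<close>, rewrites \<open>x m\<close> or
  \<open>m y\<close>, and a lexicographic induction on accessible parts shows that \<open>x m y\<close> terminates
  whenever \<open>x m\<close> and \<open>m y\<close> do. Moreover a trailing \<open>\<lhd>\<close> and a leading \<open>\<rhd>\<close> are never
  touched. Induction on \<open>x\<close> now shows that \<open>x y\<close> and \<open>x y \<rhd>\<close> terminate for marker-free
  \<open>y\<close>: the pieces \<open>m y\<close> and \<open>m y \<rhd>\<close> right of the last marker are, up to an inert
  leading \<open>\<rhd>\<close>, factors of \<open>\<lhd> y \<rhd>\<close>.
\<close>

lemma termip_iff_no_infinite_chain:
  "termip r x \<longleftrightarrow> \<not> (\<exists>f. f 0 = x \<and> (\<forall>i. r (f i) (f (Suc i))))"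
proof
  assume "termip r x"
  then show "\<not> (\<exists>f. f 0 = x \<and> (\<forall>i. r (f i) (f (Suc i))))"
  proof (induction rule: accp_induct_rule)
    case (1 x)
    show ?case
    proof
      assume "\<exists>f. f 0 = x \<and> (\<forall>i. r (f i) (f (Suc i)))"
      then obtain f where "f 0 = x" "\<forall>i. r (f i) (f (Suc i))" by blast
      with "1.IH"[of "f (Suc 0)"] show False by fastforce
    qed
  qed
next
  assume no_chain: "\<not> (\<exists>f. f 0 = x \<and> (\<forall>i. r (f i) (f (Suc i))))"
  show "termip r x"
  proof (rule ccontr)
    assume "\<not> termip r x"
    have "\<exists>f. \<forall>n. (\<not> termip r (f n) \<and> (n = 0 \<longrightarrow> f n = x)) \<and> r (f n) (f (Suc n))"
    proof (rule dependent_nat_choice)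
      show "\<exists>y. \<not> termip r y \<and> (0 = 0 \<longrightarrow> y = x)"
        using \<open>\<not> termip r x\<close> by blast
      show "\<exists>z. (\<not> termip r z \<and> (Suc n = 0 \<longrightarrow> z = x)) \<and> r y z"
        if "\<not> termip r y \<and> (n = 0 \<longrightarrow> y = x)" for y n
        using that by (auto elim: not_accp_down)
    qed
    with no_chain show False by blast
  qed
qed

lemma termip_pullback:
  assumes "termip r (\<phi> x)" and "P x"
    and simulation: "\<And>y z. P y \<Longrightarrow> r' y z \<Longrightarrow> P z \<and> r (\<phi> y) (\<phi> z)"
  shows "termip r' x"
proof -
  have "termip r' x" if "termip r a" "a = \<phi> x" "P x" for a x
    using that
  proof (induction arbitrary: x rule: accp_induct_rule)
    case (1 a)
    show ?case
    proof (rule accp.accI)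
      fix z assume "r'\<inverse>\<inverse> z x"
      with simulation[OF \<open>P x\<close>] have "P z" "r (\<phi> x) (\<phi> z)" by auto
      with "1.IH" \<open>a = \<phi> x\<close> show "termip r' z" by blast
    qed
  qed
  with assms(1,2) show ?thesis by blast
qed

lemma termip_iff_not_infinite_seq_from:
  "termip (rstep R) s \<longleftrightarrow> \<not> infinite_seq_from R s"
  by (simp add: infinite_seq_from_def termip_iff_no_infinite_chain)

lemma terminating_iff_termip: "terminating R \<longleftrightarrow> (\<forall>s. termip (rstep R) s)"
  by (auto simp: terminating_def termip_iff_no_infinite_chain)

lemma rstepI: "(l, r) \<in> R \<Longrightarrow> rstep R (u @ l @ v) (u @ r @ v)"
  unfolding rstep_def by blast

lemma rstep_append_context: "rstep R s t \<Longrightarrow> rstep R (a @ s @ b) (a @ t @ b)"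
  unfolding rstep_def by (metis append.assoc)

lemma termip_rstep_infix:
  assumes "termip (rstep R) (a @ s @ b)"
  shows "termip (rstep R) s"
  using termip_pullback[where \<phi> = "\<lambda>s. a @ s @ b" and P = "\<lambda>_. True"] assms
    rstep_append_context by blast

lemma rstep_snoc_inert:
  assumes lhs: "\<And>l r. (l, r) \<in> R \<Longrightarrow> l \<noteq> [] \<and> last l \<noteq> m"
    and "rstep R (x @ [m]) t"
  shows "\<exists>x'. t = x' @ [m] \<and> rstep R x x'"
proof -
  obtain u l v r where lr: "(l, r) \<in> R" and s: "x @ [m] = u @ l @ v" and t: "t = u @ r @ v"
    using assms(2) unfolding rstep_def by blast
  have "v \<noteq> []"
    using lhs[OF lr] s by (metis append_Nil2 last_appendR last_snoc)
  then obtain v' where "v = v' @ [m]"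
    using s by (metis append_assoc append_butlast_last_id last_appendR last_snoc)
  with s t lr show ?thesis by (auto intro: rstepI)
qed

lemma rstep_Cons_inert:
  assumes lhs: "\<And>l r. (l, r) \<in> R \<Longrightarrow> l \<noteq> [] \<and> hd l \<noteq> m"
    and "rstep R (m # y) t"
  shows "\<exists>y'. t = m # y' \<and> rstep R y y'"
proof -
  obtain u l v r where lr: "(l, r) \<in> R" and s: "m # y = u @ l @ v" and t: "t = u @ r @ v"
    using assms(2) unfolding rstep_def by blast
  have "u \<noteq> []"
    using lhs[OF lr] s by (metis append_Nil hd_append2 list.sel(1))
  then obtain u' where "u = m # u'"
    using s by (metis Cons_eq_append_conv)
  with s t lr show ?thesis by (auto intro: rstepI)
qed

lemma termip_snoc_inert:
  assumes lhs: "\<And>l r. (l, r) \<in> R \<Longrightarrow> l \<noteq> [] \<and> last l \<noteq> m"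
    and "termip (rstep R) x"
  shows "termip (rstep R) (x @ [m])"
proof (rule termip_pullback[where \<phi> = butlast and P = "\<lambda>s. \<exists>x. s = x @ [m]"])
  show "termip (rstep R) (butlast (x @ [m]))" "\<exists>x'. x @ [m] = x' @ [m]"
    using assms(2) by simp_all
  show "(\<exists>x. t = x @ [m]) \<and> rstep R (butlast s) (butlast t)"
    if "\<exists>x. s = x @ [m]" "rstep R s t" for s t
    using that rstep_snoc_inert[OF lhs] by fastforce
qed

lemma termip_Cons_inert:
  assumes lhs: "\<And>l r. (l, r) \<in> R \<Longrightarrow> l \<noteq> [] \<and> hd l \<noteq> m"
    and "termip (rstep R) y"
  shows "termip (rstep R) (m # y)"
proof (rule termip_pullback[where \<phi> = tl and P = "\<lambda>s. \<exists>y. s = m # y"])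
  show "termip (rstep R) (tl (m # y))" "\<exists>y'. m # y = m # y'"
    using assms(2) by simp_all
  show "(\<exists>y. t = m # y) \<and> rstep R (tl s) (tl t)"
    if "\<exists>y. s = m # y" "rstep R s t" for s t
    using that rstep_Cons_inert[OF lhs] by fastforce
qed

definition border_symbol :: "srs \<Rightarrow> sym \<Rightarrow> bool" where
  "border_symbol R m \<longleftrightarrow> (\<forall>l r l1 l2. (l, r) \<in> R \<and> l = l1 @ m # l2 \<longrightarrow>
     (l1 = [] \<and> (\<exists>r'. r = m # r')) \<or> (l2 = [] \<and> (\<exists>r'. r = r' @ [m])))"

lemma append_Cons_eq_append_cases:
  assumes "x @ m # y = u @ l @ v"
  obtains (in_prefix) u' where "u = x @ m # u'" "y = u' @ l @ v"
    | (in_suffix) v' where "v = v' @ m # y" "x = u @ l @ v'"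
    | (in_redex) l1 l2 where "l = l1 @ m # l2" "x = u @ l1" "y = l2 @ v"
  using assms by (auto simp: append_eq_append_conv2 append_eq_Cons_conv Cons_eq_append_conv)

lemma rstep_at_border_symbol:
  assumes border: "border_symbol R m" and "rstep R (x @ m # y) t"
  obtains (left) x' where "t = x' @ m # y" "rstep R (x @ [m]) (x' @ [m])"
    | (right) y' where "t = x @ m # y'" "rstep R (m # y) (m # y')"
proof -
  obtain u l v r where lr: "(l, r) \<in> R" and s: "x @ m # y = u @ l @ v" and t: "t = u @ r @ v"
    using assms(2) unfolding rstep_def by blast
  from s show thesis
  proof (cases rule: append_Cons_eq_append_cases)
    case (in_prefix u')
    then show thesis
      using right[of "u' @ r @ v"] t rstepI[OF lr, of "m # u'" v] by simp
  next
    case (in_suffix v')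
    then show thesis
      using left[of "u @ r @ v'"] t rstepI[OF lr, of u "v' @ [m]"] by simp
  next
    case (in_redex l1 l2)
    with border lr consider r' where "l1 = []" "r = m # r'" | r' where "l2 = []" "r = r' @ [m]"
      unfolding border_symbol_def by blast
    then show thesis
    proof cases
      case (1 r')
      then show thesis
        using in_redex right[of "r' @ v"] t rstepI[OF lr, of "[]" v] by simp
    next
      case (2 r')
      then show thesis
        using in_redex left[of "u @ r'"] t rstepI[OF lr, of u "[]"] by simp
    qed
  qed
qed

lemma termip_append_border_symbol:
  assumes border: "border_symbol R m"
    and "termip (rstep R) (x @ [m])" and "termip (rstep R) (m # y)"
  shows "termip (rstep R) (x @ m # y)"
proof -
  have "termip (rstep R) (x @ m # y)"
    if "termip (rstep R) a" "a = x @ [m]" "termip (rstep R) b" "b = m # y" for a b x y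
    using that
  proof (induction arbitrary: x b y rule: accp_induct_rule)
    case (1 a)
    note left_IH = "1.IH"
    from \<open>termip (rstep R) b\<close> \<open>b = m # y\<close> show ?case
    proof (induction arbitrary: y rule: accp_induct_rule)
      case (1 b)
      note right_IH = "1.IH"
      show ?case
      proof (rule accp.accI)
        fix t assume "(rstep R)\<inverse>\<inverse> t (x @ m # y)"
        then have "rstep R (x @ m # y) t" by simp
        with border show "termip (rstep R) t"
        proof (cases rule: rstep_at_border_symbol)
          case (left x')
          with left_IH[of "x' @ [m]" x' b y] \<open>a = x @ [m]\<close> \<open>termip (rstep R) b\<close> \<open>b = m # y\<close>
          show ?thesis by (blast intro: conversepI)
        next
          case (right y')
          with right_IH[of "m # y'" y'] \<open>b = m # y\<close> show ?thesis by (blast intro: conversepI)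
        qed
      qed
    qed
  qed
  with assms(2,3) show ?thesis by blast
qed

lemma border_symbol_T_sys: "border_symbol T_sys LM" "border_symbol T_sys RM"
  unfolding border_symbol_def T_sys_def D_T_def A_rules_def B_rules_def
  by (auto simp: append_eq_Cons_conv Cons_eq_append_conv)

lemma T_sys_lhs_last: "(l, r) \<in> T_sys \<Longrightarrow> l \<noteq> [] \<and> last l \<noteq> LM"
  and T_sys_lhs_hd: "(l, r) \<in> T_sys \<Longrightarrow> l \<noteq> [] \<and> hd l \<noteq> RM"
  unfolding T_sys_def D_T_def A_rules_def B_rules_def by auto

lemma not_inner_iff: "m \<notin> inner \<longleftrightarrow> m = LM \<or> m = RM"
  unfolding inner_def by (cases m) auto

lemma termip_T_sys_inner:
  assumes framed: "\<And>w. set w \<subseteq> inner \<Longrightarrow> termip (rstep T_sys) (LM # w @ [RM])"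
    and "set y \<subseteq> inner"
  shows "termip (rstep T_sys) y" and "termip (rstep T_sys) (y @ [RM])"
  using framed[OF \<open>set y \<subseteq> inner\<close>] termip_rstep_infix[of T_sys "[LM]" y "[RM]"]
    termip_rstep_infix[of T_sys "[LM]" "y @ [RM]" "[]"] by simp_all

lemma termip_T_sys_marker_Cons:
  assumes framed: "\<And>w. set w \<subseteq> inner \<Longrightarrow> termip (rstep T_sys) (LM # w @ [RM])"
    and "m \<notin> inner" and "set y \<subseteq> inner"
  shows "termip (rstep T_sys) (m # y)" and "termip (rstep T_sys) (m # y @ [RM])"
proof -
  have LM_y_RM: "termip (rstep T_sys) (LM # y @ [RM])"
    using framed \<open>set y \<subseteq> inner\<close> .
  then have LM_y: "termip (rstep T_sys) (LM # y)"
    using termip_rstep_infix[of T_sys "[]" "LM # y" "[RM]"] by simp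
  from \<open>m \<notin> inner\<close> have "m = LM \<or> m = RM" by (simp add: not_inner_iff)
  then show "termip (rstep T_sys) (m # y)" and "termip (rstep T_sys) (m # y @ [RM])"
    using LM_y LM_y_RM termip_Cons_inert[OF T_sys_lhs_hd]
      termip_T_sys_inner[OF framed \<open>set y \<subseteq> inner\<close>] by auto
qed

lemma termip_T_sys_if_framed:
  assumes framed: "\<And>w. set w \<subseteq> inner \<Longrightarrow> termip (rstep T_sys) (LM # w @ [RM])"
  shows "termip (rstep T_sys) s"
proof -
  have "termip (rstep T_sys) (x @ y) \<and> termip (rstep T_sys) (x @ y @ [RM])"
    if "set y \<subseteq> inner" for x y
    using that
  proof (induction x arbitrary: y rule: rev_induct)
    case Nil
    then show ?case using termip_T_sys_inner[OF framed Nil.prems] by (simp del: conversep_iff)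
  next
    case (snoc a x)
    show ?case
    proof (cases "a \<in> inner")
      case True
      with snoc.IH[of "a # y"] snoc.prems show ?thesis by simp
    next
      case False
      have "termip (rstep T_sys) x" "termip (rstep T_sys) (x @ [RM])"
        using snoc.IH[of "[]"] by (simp_all del: conversep_iff)
      with False have "termip (rstep T_sys) (x @ [a])"
        using termip_snoc_inert[of T_sys LM, OF T_sys_lhs_last] by (auto simp: not_inner_iff)
      with False snoc.prems show ?thesis
        using termip_T_sys_marker_Cons[OF framed] termip_append_border_symbol border_symbol_T_sys
        by (auto simp: not_inner_iff simp del: conversep_iff)
    qed
  qed
  from this[of "[]" s] show ?thesis by simp
qed

theorem mainTheorem5:
  assumes "\<forall>w. set w \<subseteq> inner \<longrightarrow> \<not> infinite_seq_from T_sys ([LM] @ w @ [RM])"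
  shows "terminating T_sys"
proof -
  have "termip (rstep T_sys) (LM # w @ [RM])" if "set w \<subseteq> inner" for w
    using assms that by (simp add: termip_iff_not_infinite_seq_from)
  then show ?thesis
    by (simp add: terminating_iff_termip termip_T_sys_if_framed)
qed

end
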